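(* Fix integers $N\geq 1$ and $r\geq 0$. Let $d=(d_0,d_1,\dots,d_N)\in\mathbb Z^{N+1}$ be a degree sequence (i.e. $d_{j+1}>d_j$ for all $j$) with $d_0=0$ and $d_N\leq N+r$. For $0\leq i\leq N$ define \[ \beta_i(\pi_d):=\frac{\prod_{j\neq 0} d_j}{\prod_{i'\neq i}|d_i-d_{i'}|}, \] where the products run over $j\in\{1,\dots,N\}$ and $i'\in\{0,\dots,N\}\setminus\{i\}$. Then for every $0\leq i\leq N$, \[ \binom{N}{i}\cdot N^{-r}\;\leq\;\beta_i(\pi_d)\;\leq\;\binom{N}{i}\cdot N^{r}. \]
   Context: The numbers $\beta_i(\pi_d)$ are the nonzero entries $\beta_{i,d_i}$ of the pure diagram $\pi_d$ of type $d$ (normalized so that $\beta_0(\pi_d)=1$), a Betti table whose only nonzero entry in homological degree $i$ is in internal degree $d_i$. *)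

theory Defs
  imports Complex_Main
begin

definition pure_beta :: "nat \<Rightarrow> (nat \<Rightarrow> int) \<Rightarrow> nat \<Rightarrow> real" where
  "pure_beta N d i =
     (\<Prod>j\<in>{1..N}. real_of_int (d j)) /
     (\<Prod>i'\<in>{0..N} - {i}. real_of_int \<bar>d i - d i'\<bar>)"

end

theory Submission
  imports Defs
begin

text \<open>Induction on the excess \<open>d\<^sub>N - N\<close>. For excess 0 the sequence is \<open>(0, 1, ..., N)\<close>
  and \<open>\<beta>\<^sub>i = N choose i\<close>. Otherwise some step \<open>d\<^bsub>k+1\<^esub> - d\<^sub>k\<close> is at least 2, and lowering
  \<open>d\<^bsub>k+1\<^esub>, ..., d\<^sub>N\<close> by one gives a degree sequence of smaller excess. Raising a tail
  \<open>d\<^sub>k, ..., d\<^sub>N\<close> by one changes \<open>\<beta>\<^sub>i = \<Prod>\<^bsub>j \<noteq> i\<^esub> d\<^sub>j / \<bar>d\<^sub>i - d\<^sub>j\<bar>\<close> (for \<open>i \<ge> 1\<close>) by a factor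
  in \<open>[1/N, N]\<close>: each factor moves by a ratio between \<open>a/(a+1)\<close> and \<open>(j+1)/j\<close>, where
  \<open>a \<ge> \<bar>i - j\<bar>\<close>, and the resulting products telescope.\<close>

lemma prod_atLeastLessThan_telescope:
  fixes f :: "nat \<Rightarrow> 'a::field"
  assumes "m \<le> n" "\<And>j. j \<in> {m..n} \<Longrightarrow> f j \<noteq> 0"
  shows "(\<Prod>j = m..<n. f (Suc j) / f j) = f n / f m"
  using assms by (induction n rule: dec_induct) (auto simp: prod.atLeastLessThan_Suc)

lemma prod_bounds_by_factor_bounds:
  fixes f g l u :: "'a \<Rightarrow> 'b::linordered_semidom"
  assumes "\<And>j. j \<in> S \<Longrightarrow> 0 \<le> f j \<and> 0 \<le> l j \<and> l j * f j \<le> g j \<and> g j \<le> u j * f j"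
  shows "prod l S * prod f S \<le> prod g S \<and> prod g S \<le> prod u S * prod f S"
proof
  have "prod l S * prod f S = (\<Prod>j\<in>S. l j * f j)" by (simp add: prod.distrib)
  also have "\<dots> \<le> prod g S" using assms by (intro prod_mono) auto
  finally show "prod l S * prod f S \<le> prod g S" .
  have "prod g S \<le> (\<Prod>j\<in>S. u j * f j)"
    using assms by (intro prod_mono) (auto intro: order_trans[OF mult_nonneg_nonneg])
  also have "\<dots> = prod u S * prod f S" by (simp add: prod.distrib)
  finally show "prod g S \<le> prod u S * prod f S" .
qed

lemma ratio_add_one_bounds:
  fixes x y m :: real
  assumes "0 \<le> m" "m \<le> y" "y \<le> x" "0 < y"
  shows "m / (m + 1) * (x / y) \<le> (x + 1) / (y + 1) \<and> (x + 1) / (y + 1) \<le> x / y"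
proof
  have "m / (m + 1) \<le> y / (y + 1)" using assms by (simp add: field_simps)
  then have "m / (m + 1) * (x / y) \<le> y / (y + 1) * (x / y)"
    using assms by (intro mult_right_mono) auto
  also have "\<dots> \<le> (x + 1) / (y + 1)" using assms by (simp add: field_simps)
  finally show "m / (m + 1) * (x / y) \<le> (x + 1) / (y + 1)" .
  show "(x + 1) / (y + 1) \<le> x / y" using assms by (simp add: field_simps)
qed

lemma ratio_denom_add_one_bounds:
  fixes x y m :: real
  assumes "0 \<le> x" "0 \<le> m" "m \<le> y" "0 < y"
  shows "m / (m + 1) * (x / y) \<le> x / (y + 1) \<and> x / (y + 1) \<le> x / y"
proof
  have "m / (m + 1) \<le> y / (y + 1)" using assms by (simp add: field_simps)
  then have "m / (m + 1) * (x / y) \<le> y / (y + 1) * (x / y)"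
    using assms by (intro mult_right_mono) auto
  also have "\<dots> = x / (y + 1)" using assms by (simp add: field_simps)
  finally show "m / (m + 1) * (x / y) \<le> x / (y + 1)" .
  show "x / (y + 1) \<le> x / y" using assms by (intro divide_left_mono) auto
qed

lemma ratio_numer_add_one_bounds:
  fixes x z m :: real
  assumes "0 < m" "m \<le> x" "0 < z"
  shows "x / z \<le> (x + 1) / z \<and> (x + 1) / z \<le> (m + 1) / m * (x / z)"
proof
  show "x / z \<le> (x + 1) / z" using assms by (intro divide_right_mono) auto
  have "(x + 1) / x \<le> (m + 1) / m" using assms by (simp add: field_simps)
  then have "(x + 1) / x * (x / z) \<le> (m + 1) / m * (x / z)"
    using assms by (intro mult_right_mono) auto
  then show "(x + 1) / z \<le> (m + 1) / m * (x / z)" using assms by simp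
qed

lemma strict_inc_diff_ge:
  assumes inc: "\<And>j. j < N \<Longrightarrow> d j < d (Suc j)" and "j \<le> j'" "j' \<le> N"
  shows "d j + int (j' - j) \<le> d j'"
  using assms(2,3)
proof (induction j' rule: dec_induct)
  case (step n)
  then show ?case using inc[of n] by (simp add: Suc_diff_le)
qed simp

lemma strict_inc_ge_index:
  assumes "\<And>j. j < N \<Longrightarrow> d j < d (Suc j)" "d 0 = 0" "j \<le> N"
  shows "int j \<le> d j"
  using strict_inc_diff_ge[of N d 0 j] assms by simp

lemma exists_jump:
  fixes d :: "nat \<Rightarrow> int"
  assumes "d 0 + int N < d N"
  obtains k where "k < N" "d k + 1 < d (Suc k)"
proof -
  have "d n \<le> d 0 + int n" if "\<forall>j<n. d (Suc j) \<le> d j + 1" for n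
    using that by (induction n) force+
  then show ?thesis using assms that by (meson not_le not_less_eq_eq)
qed

lemma pure_beta_zero:
  assumes "d 0 = 0" and pos: "\<And>j. j \<in> {1..N} \<Longrightarrow> 0 < d j"
  shows "pure_beta N d 0 = 1"
proof -
  have "{0..N} - {0} = {1..N}" by auto
  then have "(\<Prod>i'\<in>{0..N} - {0}. real_of_int \<bar>d 0 - d i'\<bar>) = (\<Prod>j\<in>{1..N}. real_of_int (d j))"
    using assms by (intro prod.cong) (simp_all add: abs_of_pos)
  moreover have "(\<Prod>j\<in>{1..N}. real_of_int (d j)) \<noteq> 0"
    using pos by (simp add: less_imp_neq[symmetric])
  ultimately show ?thesis unfolding pure_beta_def by simp
qed

lemma pure_beta_nonneg:
  assumes "\<And>j. j < N \<Longrightarrow> d j < d (Suc j)" "d 0 = 0"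
  shows "0 \<le> pure_beta N d i"
proof -
  have "0 \<le> d j" if "j \<le> N" for j
    using strict_inc_ge_index[OF assms that] by simp
  then show ?thesis
    unfolding pure_beta_def by (intro divide_nonneg_nonneg prod_nonneg) auto
qed

lemma pure_beta_id:
  assumes id: "\<And>j. j \<le> N \<Longrightarrow> d j = int j" and i: "i \<le> N"
  shows "pure_beta N d i = real (N choose i)"
proof -
  have "(\<Prod>i'\<in>{0..<i}. real_of_int \<bar>d i - d i'\<bar>) = (\<Prod>i'\<in>{0..<i}. real (i - i'))"
    using assms by (intro prod.cong) (auto simp: of_nat_diff)
  also have "\<dots> = fact i" by (simp add: fact_prod_rev)
  finally have below: "(\<Prod>i'\<in>{0..<i}. real_of_int \<bar>d i - d i'\<bar>) = fact i" .
  have "(\<Prod>i'\<in>{Suc i..N}. real_of_int \<bar>d i - d i'\<bar>) = (\<Prod>t\<in>{1..N - i}. real_of_int \<bar>d i - d (i + t)\<bar>)"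
    using prod.atLeastAtMost_shift_bounds[of _ 1 i "N - i"] i by (simp add: comp_def add.commute del: of_int_abs)
  also have "\<dots> = (\<Prod>t\<in>{1..N - i}. real t)"
    using assms by (intro prod.cong) auto
  also have "\<dots> = fact (N - i)" by (simp add: fact_prod)
  finally have above: "(\<Prod>i'\<in>{Suc i..N}. real_of_int \<bar>d i - d i'\<bar>) = fact (N - i)" .
  have split: "{0..N} - {i} = {0..<i} \<union> {Suc i..N}" using i by auto
  have "(\<Prod>i'\<in>{0..N} - {i}. real_of_int \<bar>d i - d i'\<bar>)
      = (\<Prod>i'\<in>{0..<i}. real_of_int \<bar>d i - d i'\<bar>) * (\<Prod>i'\<in>{Suc i..N}. real_of_int \<bar>d i - d i'\<bar>)"
    unfolding split by (intro prod.union_disjoint) auto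
  then have "(\<Prod>i'\<in>{0..N} - {i}. real_of_int \<bar>d i - d i'\<bar>) = fact i * fact (N - i)"
    by (simp only: below above)
  moreover have "(\<Prod>j\<in>{1..N}. real_of_int (d j)) = fact N"
    using id by (simp add: fact_prod)
  ultimately show ?thesis
    unfolding pure_beta_def using binomial_fact[OF i, where 'a=real] by simp
qed

definition beta_factor :: "(nat \<Rightarrow> int) \<Rightarrow> nat \<Rightarrow> nat \<Rightarrow> real" where
  "beta_factor d i j = real_of_int (d j) / real_of_int \<bar>d i - d j\<bar>"

lemma pure_beta_eq_prod_beta_factor:
  assumes "d 0 = 0" "0 < d i" "1 \<le> i" "i \<le> N"
  shows "pure_beta N d i = (\<Prod>j\<in>{1..N} - {i}. beta_factor d i j)"
proof -
  have den: "{0..N} - {i} = insert 0 ({1..N} - {i})" using assms by auto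
  have "pure_beta N d i = (real_of_int (d i) * (\<Prod>j\<in>{1..N} - {i}. real_of_int (d j))) /
      (real_of_int \<bar>d i - d 0\<bar> * (\<Prod>j\<in>{1..N} - {i}. real_of_int \<bar>d i - d j\<bar>))"
    unfolding pure_beta_def den using assms by (simp add: prod.remove)
  also have "\<dots> = (\<Prod>j\<in>{1..N} - {i}. beta_factor d i j)"
    using assms by (simp add: beta_factor_def prod_dividef)
  finally show ?thesis .
qed

definition raise_tail :: "nat \<Rightarrow> (nat \<Rightarrow> int) \<Rightarrow> nat \<Rightarrow> int" where
  "raise_tail k d j = (if k \<le> j then d j + 1 else d j)"

lemma pure_beta_raise_tail_bounds_by_factors:
  assumes inc: "\<And>j. j < N \<Longrightarrow> d j < d (Suc j)" and d0: "d 0 = 0"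
    and "1 \<le> k" "1 \<le> i" "i \<le> N"
    and factor_bounds: "\<And>j. j \<in> {1..N} - {i} \<Longrightarrow> 0 \<le> l j
      \<and> l j * beta_factor d i j \<le> beta_factor (raise_tail k d) i j
      \<and> beta_factor (raise_tail k d) i j \<le> u j * beta_factor d i j"
  shows "prod l ({1..N} - {i}) * pure_beta N d i \<le> pure_beta N (raise_tail k d) i
    \<and> pure_beta N (raise_tail k d) i \<le> prod u ({1..N} - {i}) * pure_beta N d i"
proof -
  have pos: "0 < d j" if "1 \<le> j" "j \<le> N" for j
    using strict_inc_ge_index[of N d j, OF inc d0] that by simp
  have "pure_beta N d i = (\<Prod>j\<in>{1..N} - {i}. beta_factor d i j)"
    using assms pos by (intro pure_beta_eq_prod_beta_factor) auto
  moreover have "pure_beta N (raise_tail k d) i = (\<Prod>j\<in>{1..N} - {i}. beta_factor (raise_tail k d) i j)"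
    using assms pos[of i] by (intro pure_beta_eq_prod_beta_factor) (auto simp: raise_tail_def)
  moreover have "0 \<le> beta_factor d i j" if "j \<in> {1..N} - {i}" for j
    using pos that by (simp add: beta_factor_def less_imp_le)
  then have "prod l ({1..N} - {i}) * (\<Prod>j\<in>{1..N} - {i}. beta_factor d i j)
      \<le> (\<Prod>j\<in>{1..N} - {i}. beta_factor (raise_tail k d) i j)
    \<and> (\<Prod>j\<in>{1..N} - {i}. beta_factor (raise_tail k d) i j)
      \<le> prod u ({1..N} - {i}) * (\<Prod>j\<in>{1..N} - {i}. beta_factor d i j)"
    by (intro prod_bounds_by_factor_bounds conjI) (simp_all add: factor_bounds)
  ultimately show ?thesis by simp
qed

lemma pure_beta_raise_tail_unraised:
  assumes inc: "\<And>j. j < N \<Longrightarrow> d j < d (Suc j)" and d0: "d 0 = 0"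
    and "1 \<le> i" "i < k" "k \<le> N"
  shows "pure_beta N d i / N \<le> pure_beta N (raise_tail k d) i
    \<and> pure_beta N (raise_tail k d) i \<le> pure_beta N d i"
proof -
  define l where "l j = (if k \<le> j then (real j - real i) / (real j - real i + 1) else 1)" for j
  have "0 \<le> l j \<and> l j * beta_factor d i j \<le> beta_factor (raise_tail k d) i j
      \<and> beta_factor (raise_tail k d) i j \<le> 1 * beta_factor d i j"
    if j: "j \<in> {1..N} - {i}" for j
  proof (cases "k \<le> j")
    case True
    have "int i \<le> d i" "d i + int (j - i) \<le> d j"
      using strict_inc_ge_index[of N d i, OF inc d0] strict_inc_diff_ge[of N d i j, OF inc] assms j True
      by auto
    then have diff: "real j - real i \<le> real_of_int (d j - d i)" "real_of_int (d j - d i) \<le> real_of_int (d j)"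
      "0 < real_of_int (d j - d i)"
      using assms True by (auto simp: of_nat_diff)
    moreover have "beta_factor d i j = real_of_int (d j) / real_of_int (d j - d i)"
      "beta_factor (raise_tail k d) i j = (real_of_int (d j) + 1) / (real_of_int (d j - d i) + 1)"
      using diff(3) assms True by (simp_all add: beta_factor_def raise_tail_def abs_if)
    moreover have "l j = (real j - real i) / (real j - real i + 1)" "0 \<le> real j - real i"
      using assms True by (simp_all add: l_def)
    ultimately show ?thesis
      using ratio_add_one_bounds[of "real j - real i", OF _ diff] by auto
  next
    case False
    then show ?thesis using assms by (simp add: l_def beta_factor_def raise_tail_def)
  qed
  then have "prod l ({1..N} - {i}) * pure_beta N d i \<le> pure_beta N (raise_tail k d) i
      \<and> pure_beta N (raise_tail k d) i \<le> prod (\<lambda>_. 1) ({1..N} - {i}) * pure_beta N d i"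
    using assms by (intro pure_beta_raise_tail_bounds_by_factors[OF inc d0]) auto
  then have bounds: "prod l ({1..N} - {i}) * pure_beta N d i \<le> pure_beta N (raise_tail k d) i
      \<and> pure_beta N (raise_tail k d) i \<le> pure_beta N d i"
    by simp
  have "prod l ({1..N} - {i}) = (\<Prod>j = k..<Suc N. (real j - real i) / (real j - real i + 1))"
    using assms by (intro prod.mono_neutral_cong_right) (auto simp: l_def)
  also have "\<dots> = (\<Prod>j = k..<Suc N. (\<lambda>t. 1 / (real t - real i)) (Suc j) / (\<lambda>t. 1 / (real t - real i)) j)"
    using assms by (intro prod.cong) (auto simp: field_simps)
  also have "\<dots> = (real k - real i) / (real N + 1 - real i)"
    using assms by (subst prod_atLeastLessThan_telescope) auto
  also have "1 / real N \<le> \<dots>"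
    using assms by (intro frac_le) auto
  finally have lower: "1 / real N \<le> prod l ({1..N} - {i})" .
  have "0 \<le> pure_beta N d i" using pure_beta_nonneg[OF inc d0] .
  then have "pure_beta N d i / N \<le> prod l ({1..N} - {i}) * pure_beta N d i"
    using mult_right_mono[OF lower] by simp
  then show ?thesis using bounds by simp
qed

lemma pure_beta_raise_tail_raised:
  assumes inc: "\<And>j. j < N \<Longrightarrow> d j < d (Suc j)" and d0: "d 0 = 0"
    and "1 \<le> k" "k \<le> i" "i \<le> N"
  shows "pure_beta N d i / N \<le> pure_beta N (raise_tail k d) i
    \<and> pure_beta N (raise_tail k d) i \<le> N * pure_beta N d i"
proof -
  define S where "S = {1..N} - {i}"
  define l where "l j = (if j < k then (real i - real j) / (real i - real j + 1) else 1)" for j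
  define u where "u j = (if j < k then 1 else (real j + 1) / real j)" for j
  have gap: "d j + int (j' - j) \<le> d j'" if "j \<le> j'" "j' \<le> N" for j j'
    using strict_inc_diff_ge[of N d j j', OF inc] that by simp
  have "0 \<le> l j \<and> l j * beta_factor d i j \<le> beta_factor (raise_tail k d) i j
      \<and> beta_factor (raise_tail k d) i j \<le> u j * beta_factor d i j"
    if j: "j \<in> S" for j
  proof (cases "j < k")
    case True
    have "int j \<le> d j" "d j + int (i - j) \<le> d i"
      using strict_inc_ge_index[of N d j, OF inc d0] gap[of j i] assms j True by (auto simp: S_def)
    then have diff: "0 \<le> real_of_int (d j)" "real i - real j \<le> real_of_int (d i - d j)"
      "0 < real_of_int (d i - d j)"
      using assms True j by (auto simp: of_nat_diff S_def)
    moreover have "beta_factor d i j = real_of_int (d j) / real_of_int (d i - d j)"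
      "beta_factor (raise_tail k d) i j = real_of_int (d j) / (real_of_int (d i - d j) + 1)"
      using diff(3) assms True by (simp_all add: beta_factor_def raise_tail_def abs_if)
    moreover have "l j = (real i - real j) / (real i - real j + 1)" "0 \<le> real i - real j" "u j = 1"
      using assms True by (simp_all add: l_def u_def)
    ultimately show ?thesis
      using ratio_denom_add_one_bounds[of _ "real i - real j", OF diff(1) _ diff(2,3)] by auto
  next
    case False
    have "int j \<le> d j" using strict_inc_ge_index[of N d j, OF inc d0] j by (simp add: S_def)
    moreover have "d i \<noteq> d j"
      using gap[of j i] gap[of i j] assms j by (cases "j < i") (auto simp: S_def)
    ultimately have diff: "real j \<le> real_of_int (d j)" "0 < real_of_int \<bar>d i - d j\<bar>"
      by auto
    moreover have "beta_factor (raise_tail k d) i j = (real_of_int (d j) + 1) / real_of_int \<bar>d i - d j\<bar>"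
      using assms False by (simp add: beta_factor_def raise_tail_def)
    moreover have "l j = 1" "u j = (real j + 1) / real j" "0 < real j"
      using False j by (auto simp: l_def u_def S_def)
    ultimately show ?thesis
      using ratio_numer_add_one_bounds[of "real j", OF _ diff] by (auto simp: beta_factor_def)
  qed
  then have bounds: "prod l S * pure_beta N d i \<le> pure_beta N (raise_tail k d) i
      \<and> pure_beta N (raise_tail k d) i \<le> prod u S * pure_beta N d i"
    unfolding S_def using assms by (intro pure_beta_raise_tail_bounds_by_factors[OF inc d0]) auto
  have "prod l S = (\<Prod>j = 1..<k. (real i - real j) / (real i - real j + 1))"
    using assms by (intro prod.mono_neutral_cong_right) (auto simp: l_def S_def)
  also have "\<dots> = (\<Prod>j = 1..<k. (\<lambda>t. real i - real t + 1) (Suc j) / (\<lambda>t. real i - real t + 1) j)"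
    by (intro prod.cong) auto
  also have "\<dots> = (real i - real k + 1) / real i"
    using assms by (subst prod_atLeastLessThan_telescope) auto
  also have "1 / real N \<le> \<dots>"
    using assms by (intro frac_le) auto
  finally have lower: "1 / real N \<le> prod l S" .
  have "(real i + 1) / real i * (\<Prod>j\<in>S. (real j + 1) / real j) = (\<Prod>j\<in>{1..N}. (real j + 1) / real j)"
    unfolding S_def using assms by (intro prod.remove [symmetric]) auto
  also have "\<dots> = (\<Prod>j = 1..<Suc N. real (Suc j) / real j)"
    by (intro prod.cong) auto
  also have "\<dots> = real N + 1"
    by (subst prod_atLeastLessThan_telescope) auto
  finally have "(\<Prod>j\<in>S. (real j + 1) / real j) = real i / (real i + 1) * (real N + 1)"
    using assms by (simp add: field_simps)
  also have "\<dots> \<le> real N"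
    using assms by (simp add: field_simps)
  finally have upper: "prod u S \<le> real N"
    using prod_mono[of S u "\<lambda>j. (real j + 1) / real j"] by (force simp: u_def S_def)
  have nonneg: "0 \<le> pure_beta N d i" using pure_beta_nonneg[OF inc d0] .
  show ?thesis
    using bounds mult_right_mono[OF lower nonneg] mult_right_mono[OF upper nonneg] by auto
qed

lemma pure_beta_raise_tail_bounds:
  assumes inc: "\<And>j. j < N \<Longrightarrow> d j < d (Suc j)" and d0: "d 0 = 0"
    and "1 \<le> k" "k \<le> N" "1 \<le> i" "i \<le> N"
  shows "pure_beta N d i / N \<le> pure_beta N (raise_tail k d) i
    \<and> pure_beta N (raise_tail k d) i \<le> N * pure_beta N d i"
proof (cases "i < k")
  case True
  have "0 \<le> pure_beta N d i" using pure_beta_nonneg[OF inc d0] .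
  then have "pure_beta N d i \<le> N * pure_beta N d i"
    using assms mult_right_mono[of 1 "real N"] by simp
  then show ?thesis
    using pure_beta_raise_tail_unraised[OF inc d0] True assms by fastforce
next
  case False
  then show ?thesis
    using pure_beta_raise_tail_raised[OF inc d0] assms by simp
qed

lemma pure_beta_bounds_excess:
  assumes "\<And>j. j < N \<Longrightarrow> d j < d (Suc j)" "d 0 = 0" "d N = int (N + e)" "1 \<le> i" "i \<le> N"
  shows "real (N choose i) / real N ^ e \<le> pure_beta N d i
    \<and> pure_beta N d i \<le> real (N choose i) * real N ^ e"
  using assms
proof (induction e arbitrary: d)
  case 0
  have "d j = int j" if "j \<le> N" for j
    using strict_inc_diff_ge[of N d 0 j] strict_inc_diff_ge[of N d j N] 0 that by simp
  then show ?case using pure_beta_id 0 by simp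
next
  case (Suc e)
  have "d 0 + int N < d N" using Suc.prems(2,3) by simp
  then obtain k where k: "k < N" "d k + 1 < d (Suc k)" by (rule exists_jump)
  define d' where "d' j = (if Suc k \<le> j then d j - 1 else d j)" for j
  have inc': "d' j < d' (Suc j)" if "j < N" for j
    using Suc.prems(1)[OF that] k by (cases "j = k") (auto simp: d'_def)
  have d'0: "d' 0 = 0" and d'N: "d' N = int (N + e)"
    using Suc.prems(2,3) k by (auto simp: d'_def)
  note IH = Suc.IH[OF inc' d'0 d'N Suc.prems(4,5)]
  have "raise_tail (Suc k) d' = d"
    by (auto simp: raise_tail_def d'_def)
  then have step: "pure_beta N d' i / N \<le> pure_beta N d i \<and> pure_beta N d i \<le> N * pure_beta N d' i"
    using pure_beta_raise_tail_bounds[of N d' "Suc k" i, OF inc' d'0] k Suc.prems by simp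
  have "real (N choose i) / real N ^ Suc e = real (N choose i) / real N ^ e / N" by simp
  also have "\<dots> \<le> pure_beta N d' i / N" using IH by (intro divide_right_mono) auto
  finally have lower: "real (N choose i) / real N ^ Suc e \<le> pure_beta N d i" using step by linarith
  have "N * pure_beta N d' i \<le> N * (real (N choose i) * real N ^ e)" using IH by (intro mult_left_mono) auto
  then have upper: "pure_beta N d i \<le> real (N choose i) * real N ^ Suc e"
    using step by (simp add: algebra_simps)
  show ?case using lower upper ..
qed

lemma pure_beta_bounds:
  assumes "\<And>j. j < N \<Longrightarrow> d j < d (Suc j)" "d 0 = 0" "d N \<le> int N + int r" "1 \<le> i" "i \<le> N"
  shows "real (N choose i) / real N ^ r \<le> pure_beta N d i
    \<and> pure_beta N d i \<le> real (N choose i) * real N ^ r"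
proof -
  define e where "e = nat (d N - int N)"
  have e: "d N = int (N + e)" "e \<le> r"
    using strict_inc_ge_index[of N d N] assms(1-3) by (auto simp: e_def)
  have power_le: "real N ^ e \<le> real N ^ r"
    using assms(4,5) e(2) by (simp add: power_increasing)
  have "real (N choose i) / real N ^ e \<le> pure_beta N d i
      \<and> pure_beta N d i \<le> real (N choose i) * real N ^ e"
    using pure_beta_bounds_excess[OF assms(1,2) e(1) assms(4,5)] .
  moreover have "real (N choose i) / real N ^ r \<le> real (N choose i) / real N ^ e"
    using assms(4,5) power_le by (intro divide_left_mono) auto
  moreover have "real (N choose i) * real N ^ e \<le> real (N choose i) * real N ^ r"
    using power_le by (intro mult_left_mono) auto
  ultimately show ?thesis by linarith
qed

theorem lemma3p1:
  fixes N r :: nat and d :: "nat \<Rightarrow> int"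
  assumes "N \<ge> 1"
    and "\<And>j. j < N \<Longrightarrow> d j < d (Suc j)"
    and "d 0 = 0"
    and "d N \<le> int N + int r"
    and "i \<le> N"
  shows "real (N choose i) * real N powi (- int r) \<le> pure_beta N d i
         \<and> pure_beta N d i \<le> real (N choose i) * real N ^ r"
proof -
  have powi: "real N powi (- int r) = 1 / real N ^ r"
    by (simp add: power_int_minus divide_inverse)
  show ?thesis
  proof (cases "i = 0")
    case True
    have "0 < d j" if "j \<in> {1..N}" for j
      using strict_inc_ge_index[of N d j] assms(2,3) that by simp
    then have "pure_beta N d 0 = 1" using pure_beta_zero[of d N] assms(3) by simp
    moreover have "1 \<le> real N ^ r" using assms(1) by simp
    ultimately show ?thesis using True powi by (simp add: divide_le_eq)
  next
    case False
    then show ?thesis using pure_beta_bounds[OF assms(2-4)] assms(5) powi by simp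
  qed
qed

end
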